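(* Every Steiner $3$-regular liner $X$ is $p$-parallel for some $p\in\{0,1\}$. Consequently, $X$ is projective or affine.
   Context: A liner is a set $X$ of points with a family of subsets called lines such that any two distinct points lie in a unique line and every line contains at least two points. For distinct $x,y$, $\overline{xy}$ is the line through them and $\overline{xx}:=\{x\}$. A set is flat if it contains $\overline{xy}$ for all its distinct points; $\overline A$ is the smallest flat containing $A$; the rank $\|A\|$ is the smallest cardinality of $B\subseteq X$ with $A\subseteq\overline B$; a plane is a flat of rank 3. $X$ is Steiner if every line has exactly three points. $X$ is $3$-regular if for every $A\subseteq X$ with $|A|<3$ and points $o\in\overline A$, $p\in X\setminus\overline A$, we have $\overline{\{p\}\cup A}=\bigcup_{u\in\overline{op}}\bigcup_{a\in\overline A}\overline{ua}$. For a cardinal $\kappa$, $X$ is $\kappa$-parallel if for every plane $P$, line $L\subseteq P$ and point $x\in P\setminus L$ there exist exactly $\kappa$ lines $\Lambda$ with $x\in\Lambda\subseteq P\setminus L$. $X$ is projective if for all $o,x,y\in X$, $p\in\overline{xy}$ and $v\in\overline{oy}\setminus\{p\}$ we have $\overline{vp}\cap\overline{ox}\neq\varnothing$. $X$ is affine if for all $o,x,y\in X$ and $p\in\overline{xy}\setminus\overline{ox}$ there exists $u\in\overline{oy}$ such that for every $v\in\overline{oy}$: $u=v$ iff $\overline{vp}\cap\overline{ox}=\varnothing$. *)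

theory Defs
  imports Main
begin

definition liner :: "'a set \<Rightarrow> 'a set set \<Rightarrow> bool" where
  "liner X Ls \<longleftrightarrow>
     (\<forall>l\<in>Ls. l \<subseteq> X \<and> (\<exists>x y. x \<in> l \<and> y \<in> l \<and> x \<noteq> y)) \<and>
     (\<forall>x\<in>X. \<forall>y\<in>X. x \<noteq> y \<longrightarrow> (\<exists>!l. l \<in> Ls \<and> x \<in> l \<and> y \<in> l))"

definition lineth :: "'a set set \<Rightarrow> 'a \<Rightarrow> 'a \<Rightarrow> 'a set" where
  "lineth Ls x y = (if x = y then {x} else (THE l. l \<in> Ls \<and> x \<in> l \<and> y \<in> l))"

definition flat :: "'a set \<Rightarrow> 'a set set \<Rightarrow> 'a set \<Rightarrow> bool" where
  "flat X Ls F \<longleftrightarrow> F \<subseteq> X \<and> (\<forall>x\<in>F. \<forall>y\<in>F. lineth Ls x y \<subseteq> F)"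

definition fhull :: "'a set \<Rightarrow> 'a set set \<Rightarrow> 'a set \<Rightarrow> 'a set" where
  "fhull X Ls A = \<Inter>{F. flat X Ls F \<and> A \<subseteq> F}"

text \<open>The rank of A equals the natural number n: n is the smallest cardinality of
  a set B \<subseteq> X with A \<subseteq> fhull B (infinite B have infinite cardinality, hence larger).\<close>
definition has_rank :: "'a set \<Rightarrow> 'a set set \<Rightarrow> 'a set \<Rightarrow> nat \<Rightarrow> bool" where
  "has_rank X Ls A n \<longleftrightarrow>
     (\<exists>B. B \<subseteq> X \<and> finite B \<and> card B = n \<and> A \<subseteq> fhull X Ls B) \<and>
     (\<forall>B. B \<subseteq> X \<and> finite B \<and> A \<subseteq> fhull X Ls B \<longrightarrow> n \<le> card B)"

definition plane :: "'a set \<Rightarrow> 'a set set \<Rightarrow> 'a set \<Rightarrow> bool" where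
  "plane X Ls P \<longleftrightarrow> flat X Ls P \<and> has_rank X Ls P 3"

definition steiner :: "'a set set \<Rightarrow> bool" where
  "steiner Ls \<longleftrightarrow> (\<forall>l\<in>Ls. finite l \<and> card l = 3)"

definition three_regular :: "'a set \<Rightarrow> 'a set set \<Rightarrow> bool" where
  "three_regular X Ls \<longleftrightarrow>
     (\<forall>A c p. A \<subseteq> X \<and> finite A \<and> card A < 3 \<and> c \<in> fhull X Ls A \<and> p \<in> X - fhull X Ls A \<longrightarrow>
        fhull X Ls (insert p A) =
          (\<Union>u\<in>lineth Ls c p. \<Union>a\<in>fhull X Ls A. lineth Ls u a))"

text \<open>k-parallel for a finite cardinal k.\<close>
definition parallel :: "'a set \<Rightarrow> 'a set set \<Rightarrow> nat \<Rightarrow> bool" where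
  "parallel X Ls k \<longleftrightarrow>
     (\<forall>P L x. plane X Ls P \<and> L \<in> Ls \<and> L \<subseteq> P \<and> x \<in> P - L \<longrightarrow>
        finite {\<Lambda>\<in>Ls. x \<in> \<Lambda> \<and> \<Lambda> \<subseteq> P - L} \<and> card {\<Lambda>\<in>Ls. x \<in> \<Lambda> \<and> \<Lambda> \<subseteq> P - L} = k)"

definition projective :: "'a set \<Rightarrow> 'a set set \<Rightarrow> bool" where
  "projective X Ls \<longleftrightarrow>
     (\<forall>c\<in>X. \<forall>x\<in>X. \<forall>y\<in>X. \<forall>p\<in>lineth Ls x y. \<forall>v\<in>lineth Ls c y - {p}.
        lineth Ls v p \<inter> lineth Ls c x \<noteq> {})"

definition affine :: "'a set \<Rightarrow> 'a set set \<Rightarrow> bool" where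
  "affine X Ls \<longleftrightarrow>
     (\<forall>c\<in>X. \<forall>x\<in>X. \<forall>y\<in>X. \<forall>p\<in>lineth Ls x y - lineth Ls c x.
        (\<exists>u\<in>lineth Ls c y. \<forall>v\<in>lineth Ls c y.
           (u = v \<longleftrightarrow> lineth Ls v p \<inter> lineth Ls c x = {})))"

end

theory Submission
  imports Defs
begin

(*
  Write third x y for the third point on the line through x and y.  By 3-regularity the flat
  hull of a noncollinear triple a, b, p consists of the points reached from a, b, p by at most
  two steps of taking third points, so every plane has at most 9 points.  Counting the lines
  through a point z of a finite plane P gives |P| = 7 + 2k, where k is the number of lines
  through z in P missing a given line of P; hence every plane has 7 points and no parallels,
  or 9 points and unique parallels.  In these two cases third (third z a) (third z b) equals
  third a b, resp. third z (third a b).  Playing these identities against each other shows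
  that a 7-point and a 9-point plane cannot share a line, and any two planes are joined by a
  chain of planes in which consecutive ones share a line.  So all planes have the same size:
  7 points make X 0-parallel and projective, 9 points make it 1-parallel and affine.
*)

locale liner_space =
  fixes X :: "'a set" and Ls :: "'a set set"
  assumes liner: "liner X Ls"
begin

abbreviation line :: "'a \<Rightarrow> 'a \<Rightarrow> 'a set" where "line \<equiv> lineth Ls"

lemma Ls_subset_X: "l \<in> Ls \<Longrightarrow> l \<subseteq> X"
  using liner unfolding liner_def by blast

lemma ex1_line: "x \<in> X \<Longrightarrow> y \<in> X \<Longrightarrow> x \<noteq> y \<Longrightarrow> \<exists>!l. l \<in> Ls \<and> x \<in> l \<and> y \<in> l"
  using liner unfolding liner_def by (elim conjE) simp

lemma line_refl [simp]: "line x x = {x}"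
  by (simp add: lineth_def)

lemma line_sym: "line x y = line y x"
  unfolding lineth_def by (simp add: conj_commute)

lemma line_in_Ls:
  assumes "x \<in> X" "y \<in> X" "x \<noteq> y"
  shows "line x y \<in> Ls"
proof -
  have "line x y = (THE l. l \<in> Ls \<and> x \<in> l \<and> y \<in> l)"
    using assms(3) by (simp add: lineth_def)
  with theI'[OF ex1_line[OF assms]] show ?thesis by simp
qed

lemma mem_line [simp]:
  assumes "x \<in> X" "y \<in> X"
  shows "x \<in> line x y" "y \<in> line x y"
proof -
  have "x \<in> line x y \<and> y \<in> line x y"
  proof (cases "x = y")
    case False
    then have "line x y = (THE l. l \<in> Ls \<and> x \<in> l \<and> y \<in> l)"
      by (simp add: lineth_def)
    with theI'[OF ex1_line[OF assms False]] show ?thesis by simp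
  qed simp
  then show "x \<in> line x y" "y \<in> line x y" by auto
qed

lemma line_unique:
  assumes "l \<in> Ls" "x \<in> l" "y \<in> l" "x \<noteq> y"
  shows "line x y = l"
proof -
  have "x \<in> X" "y \<in> X" using assms Ls_subset_X by auto
  have "line x y = (THE l. l \<in> Ls \<and> x \<in> l \<and> y \<in> l)"
    using assms(4) by (simp add: lineth_def)
  also have "\<dots> = l"
    using the1_equality[OF ex1_line[OF \<open>x \<in> X\<close> \<open>y \<in> X\<close> assms(4)]] assms by blast
  finally show ?thesis .
qed

lemma line_subset_X:
  assumes "x \<in> X" "y \<in> X"
  shows "line x y \<subseteq> X"
  using assms line_in_Ls Ls_subset_X by (cases "x = y") auto

lemma line_eq_line:
  assumes "x \<in> X" "y \<in> X" "u \<in> line x y" "v \<in> line x y" "u \<noteq> v"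
  shows "line u v = line x y"
proof (cases "x = y")
  case False
  with assms show ?thesis by (intro line_unique line_in_Ls)
qed (use assms in simp)

lemma line_eq_line_through:
  assumes "x \<in> X" "y \<in> X" "a \<in> line x y" "a \<noteq> x"
  shows "line x a = line x y"
  using line_eq_line[OF assms(1,2) _ assms(3)] assms by simp

definition noncollinear :: "'a \<Rightarrow> 'a \<Rightarrow> 'a \<Rightarrow> bool" where
  "noncollinear a b p \<longleftrightarrow> a \<in> X \<and> b \<in> X \<and> p \<in> X \<and> a \<noteq> b \<and> p \<notin> line a b"

lemma noncollinear_in_X:
  "noncollinear a b p \<Longrightarrow> a \<in> X" "noncollinear a b p \<Longrightarrow> b \<in> X" "noncollinear a b p \<Longrightarrow> p \<in> X"
  unfolding noncollinear_def by blast+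

lemma noncollinear_distinct:
  assumes "noncollinear a b p"
  shows "a \<noteq> b" "a \<noteq> p" "b \<noteq> p"
  using assms mem_line[of a b] unfolding noncollinear_def by auto

lemma noncollinear_commute:
  assumes "noncollinear a b p"
  shows "noncollinear b a p"
  using assms line_sym[of a b] unfolding noncollinear_def by auto

lemma noncollinear_swap:
  assumes "noncollinear a b p"
  shows "noncollinear a p b"
proof -
  have X: "a \<in> X" "b \<in> X" "p \<in> X" and "a \<noteq> p"
    using noncollinear_in_X[OF assms] noncollinear_distinct[OF assms] by auto
  have "b \<notin> line a p"
  proof
    assume "b \<in> line a p"
    then have "line a b = line a p"
      using line_eq_line[OF X(1,3), of a b] noncollinear_distinct[OF assms] X by simp
    then show False using assms X unfolding noncollinear_def by simp
  qed
  with X \<open>a \<noteq> p\<close> show ?thesis unfolding noncollinear_def by blast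
qed

lemma noncollinear_perms:
  assumes "noncollinear a b p"
  shows "noncollinear b a p" "noncollinear a p b" "noncollinear p a b"
    "noncollinear b p a" "noncollinear p b a"
proof -
  show 1: "noncollinear b a p" using noncollinear_commute[OF assms] .
  show 2: "noncollinear a p b" using noncollinear_swap[OF assms] .
  show "noncollinear p a b" using noncollinear_commute[OF 2] .
  show 3: "noncollinear b p a" using noncollinear_swap[OF 1] .
  show "noncollinear p b a" using noncollinear_commute[OF 3] .
qed

lemma noncollinear_if_mem_line:
  assumes "c \<in> X" "x \<in> X" "y \<in> X" "c \<noteq> x" "p \<in> line x y" "p \<notin> line c x"
  shows "noncollinear c x y"
proof -
  have "y \<notin> line c x"
  proof
    assume "y \<in> line c x"
    then have "line x y \<subseteq> line c x"
      using line_eq_line[OF assms(1,2), of x y] assms(1,2) by (cases "x = y") auto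
    with assms(5,6) show False by blast
  qed
  with assms show ?thesis by (simp add: noncollinear_def)
qed

lemma line_disjoint_iff_eq:
  assumes "c \<in> X" "y \<in> X" "p \<in> line c y" "v \<in> line c y" "c \<in> m" "p \<notin> m"
  shows "(p = v) \<longleftrightarrow> line v p \<inter> m = {}"
proof (cases "v = p")
  case False
  then have "line v p = line c y" using line_eq_line[OF assms(1,2,4,3)] by simp
  then show ?thesis using False mem_line[OF assms(1,2)] assms(5) by auto
qed (use assms(6) in auto)

lemma flat_X: "flat X Ls X"
  unfolding flat_def using line_subset_X by blast

lemma flat_line:
  assumes "x \<in> X" "y \<in> X"
  shows "flat X Ls (line x y)"
  unfolding flat_def
proof (intro conjI ballI)
  show "line x y \<subseteq> X" using assms by (rule line_subset_X)
  show "line u v \<subseteq> line x y" if "u \<in> line x y" "v \<in> line x y" for u v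
    using that line_eq_line[OF assms that] by (cases "u = v") auto
qed

lemma flat_subset_X: "flat X Ls F \<Longrightarrow> F \<subseteq> X"
  unfolding flat_def by blast

lemma flat_line_subset: "flat X Ls F \<Longrightarrow> x \<in> F \<Longrightarrow> y \<in> F \<Longrightarrow> line x y \<subseteq> F"
  unfolding flat_def by blast

lemma fhull_least: "flat X Ls F \<Longrightarrow> A \<subseteq> F \<Longrightarrow> fhull X Ls A \<subseteq> F"
  unfolding fhull_def by blast

lemma fhull_superset: "A \<subseteq> fhull X Ls A"
  unfolding fhull_def by blast

lemma flat_fhull:
  assumes "A \<subseteq> X"
  shows "flat X Ls (fhull X Ls A)"
  unfolding flat_def
proof (intro conjI ballI)
  show "fhull X Ls A \<subseteq> X" using fhull_least[OF flat_X assms] .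
  show "line x y \<subseteq> fhull X Ls A" if "x \<in> fhull X Ls A" "y \<in> fhull X Ls A" for x y
    using that flat_line_subset unfolding fhull_def by blast
qed

lemma fhull_pair:
  assumes "x \<in> X" "y \<in> X"
  shows "fhull X Ls {x, y} = line x y"
proof
  show "fhull X Ls {x, y} \<subseteq> line x y"
    using fhull_least[OF flat_line[OF assms]] assms by simp
  show "line x y \<subseteq> fhull X Ls {x, y}"
    using flat_line_subset[OF flat_fhull] fhull_superset[of "{x, y}"] assms by simp
qed

lemma line_inter_line:
  assumes "l \<in> Ls" "a \<in> l" "z \<in> X" "z \<notin> l"
  shows "line z a \<inter> l = {a}"
proof -
  have "a \<in> X" using assms Ls_subset_X by blast
  have "q = a" if "q \<in> line z a" "q \<in> l" for q
  proof (rule ccontr)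
    assume "q \<noteq> a"
    then have "line q a = l" using line_unique assms that by blast
    moreover have "line q a = line z a"
      using line_eq_line[OF assms(3) \<open>a \<in> X\<close> that(1)] \<open>q \<noteq> a\<close> \<open>a \<in> X\<close> assms(3) by simp
    ultimately show False using assms(3,4) by (metis mem_line(1) \<open>a \<in> X\<close>)
  qed
  then show ?thesis using assms \<open>a \<in> X\<close> by auto
qed

end

locale steiner_liner = liner_space +
  assumes steiner: "steiner Ls"
begin

lemma card_line: "l \<in> Ls \<Longrightarrow> finite l \<and> card l = 3"
  using steiner unfolding steiner_def by blast

definition third :: "'a \<Rightarrow> 'a \<Rightarrow> 'a" where
  "third x y = (if x = y then x else (THE z. z \<in> line x y \<and> z \<noteq> x \<and> z \<noteq> y))"

lemma line_eq_third_distinct: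
  assumes "x \<in> X" "y \<in> X" "x \<noteq> y"
  shows "line x y = {x, y, third x y}" "third x y \<noteq> x" "third x y \<noteq> y"
proof -
  have l: "finite (line x y)" "card (line x y) = 3" "{x, y} \<subseteq> line x y"
    using card_line[OF line_in_Ls[OF assms]] assms by auto
  then have "card (line x y - {x, y}) = 1"
    using assms(3) by (simp add: card_Diff_subset)
  then obtain z where z: "line x y - {x, y} = {z}" by (rule card_1_singletonE)
  then have "z \<in> line x y" "z \<noteq> x" "z \<noteq> y" by blast+
  moreover have "line x y = {x, y, z}" using z l(3) by blast
  moreover have "third x y = z"
    unfolding third_def using assms(3) z by auto
  ultimately show "line x y = {x, y, third x y}" "third x y \<noteq> x" "third x y \<noteq> y"
    by simp_all
qed

lemma third_refl [simp]: "third x x = x"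
  by (simp add: third_def)

lemma line_eq_third: "x \<in> X \<Longrightarrow> y \<in> X \<Longrightarrow> line x y = {x, y, third x y}"
  using line_eq_third_distinct by (cases "x = y") auto

lemma third_mem_line: "x \<in> X \<Longrightarrow> y \<in> X \<Longrightarrow> third x y \<in> line x y"
  using line_eq_third by blast

lemma third_in_X: "x \<in> X \<Longrightarrow> y \<in> X \<Longrightarrow> third x y \<in> X"
  using third_mem_line line_subset_X by blast

lemma third_unique:
  assumes "x \<in> X" "y \<in> X" "z \<in> line x y" "z \<noteq> x" "z \<noteq> y"
  shows "third x y = z"
  using assms line_eq_third by auto

lemma third_commute: "third x y = third y x"
  unfolding third_def by (simp add: line_sym conj_commute)

lemma third_third [simp]:
  assumes "x \<in> X" "y \<in> X"
  shows "third x (third x y) = y"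
proof (cases "x = y")
  case False
  note xy = line_eq_third_distinct[OF assms False]
  have "line x (third x y) = line x y"
    using line_eq_line[OF assms, of x "third x y"] xy(2) third_mem_line[OF assms] assms
    by simp
  with xy assms show ?thesis
    by (intro third_unique) (auto intro: third_in_X)
qed simp

lemma third_swap:
  assumes "x \<in> X" "y \<in> X" "third x y = z"
  shows "third x z = y"
  using assms by auto

lemma third_inj:
  assumes "x \<in> X" "y \<in> X" "y' \<in> X" "third x y = third x y'"
  shows "y = y'"
proof -
  have "y = third x (third x y)" using assms(1,2) by simp
  also have "\<dots> = y'" using assms by simp
  finally show ?thesis .
qed

lemma line_third:
  assumes "x \<in> X" "y \<in> X" "x \<noteq> y"
  shows "line x (third x y) = line x y"
  by (rule line_eq_line[OF assms(1,2)]) (use line_eq_third_distinct[OF assms] assms in auto)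

lemma flat_third: "flat X Ls F \<Longrightarrow> x \<in> F \<Longrightarrow> y \<in> F \<Longrightarrow> third x y \<in> F"
  using flat_line_subset third_mem_line flat_subset_X by blast

lemma third_notin_line:
  assumes "l \<in> Ls" "a \<in> l" "z \<in> X" "z \<notin> l"
  shows "third z a \<notin> l" "third z a \<noteq> z"
proof -
  have "a \<in> X" "z \<noteq> a" using assms Ls_subset_X by auto
  then have "third z a \<noteq> a" "third z a \<noteq> z" using line_eq_third_distinct assms(3) by auto
  then show "third z a \<noteq> z" "third z a \<notin> l"
    using line_inter_line[OF assms] third_mem_line[OF assms(3) \<open>a \<in> X\<close>] by auto
qed

definition pencil :: "'a set \<Rightarrow> 'a \<Rightarrow> 'a set set" where
  "pencil P z = {\<Lambda>\<in>Ls. z \<in> \<Lambda> \<and> \<Lambda> \<subseteq> P}"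

definition parallels :: "'a set \<Rightarrow> 'a set \<Rightarrow> 'a \<Rightarrow> 'a set set" where
  "parallels P l z = {\<Lambda>\<in>Ls. z \<in> \<Lambda> \<and> \<Lambda> \<subseteq> P - l}"

lemma finite_pencil: "finite P \<Longrightarrow> finite (pencil P z)"
  unfolding pencil_def by (rule finite_subset[of _ "Pow P"]) auto

lemma card_flat_pencil:
  assumes P: "flat X Ls P" "finite P" and z: "z \<in> P"
  shows "card P = 1 + 2 * card (pencil P z)"
proof -
  have zX: "z \<in> X" using z flat_subset_X[OF P(1)] by blast
  have cover: "P - {z} = (\<Union>\<Lambda>\<in>pencil P z. \<Lambda> - {z})"
  proof
    show "P - {z} \<subseteq> (\<Union>\<Lambda>\<in>pencil P z. \<Lambda> - {z})"
    proof
      fix q assume q: "q \<in> P - {z}"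
      then have "q \<in> X" using flat_subset_X[OF P(1)] by blast
      then have "line z q \<in> pencil P z" "q \<in> line z q - {z}"
        unfolding pencil_def using q zX line_in_Ls flat_line_subset[OF P(1) z] by auto
      then show "q \<in> (\<Union>\<Lambda>\<in>pencil P z. \<Lambda> - {z})" by blast
    qed
  qed (auto simp: pencil_def)
  have "card (\<Union>\<Lambda>\<in>pencil P z. \<Lambda> - {z}) = (\<Sum>\<Lambda>\<in>pencil P z. card (\<Lambda> - {z}))"
  proof (rule card_UN_disjoint[OF finite_pencil[OF P(2)]])
    show "\<forall>\<Lambda>\<in>pencil P z. finite (\<Lambda> - {z})"
      using card_line unfolding pencil_def by blast
    show "\<forall>\<Lambda>\<in>pencil P z. \<forall>\<Lambda>'\<in>pencil P z. \<Lambda> \<noteq> \<Lambda>' \<longrightarrow> (\<Lambda> - {z}) \<inter> (\<Lambda>' - {z}) = {}"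
    proof (intro ballI impI equals0I)
      fix \<Lambda> \<Lambda>' q
      assume "\<Lambda> \<in> pencil P z" "\<Lambda>' \<in> pencil P z" "\<Lambda> \<noteq> \<Lambda>'" "q \<in> (\<Lambda> - {z}) \<inter> (\<Lambda>' - {z})"
      then show False
        using line_unique[of \<Lambda> z q] line_unique[of \<Lambda>' z q] unfolding pencil_def by auto
    qed
  qed
  also have "\<dots> = (\<Sum>\<Lambda>\<in>pencil P z. 2)"
    by (rule sum.cong) (auto simp: pencil_def card_line)
  finally have "card (P - {z}) = 2 * card (pencil P z)" using cover by simp
  then show ?thesis using P(2) z card_Diff_singleton[of z P] card_gt_0_iff[of P] by auto
qed

lemma card_pencil_parallels:
  assumes P: "flat X Ls P" "finite P" and l: "l \<in> Ls" "l \<subseteq> P" and z: "z \<in> P" "z \<notin> l"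
  shows "card (pencil P z) = 3 + card (parallels P l z)"
proof -
  have zX: "z \<in> X" using z flat_subset_X[OF P(1)] by blast
  have split: "pencil P z = line z ` l \<union> parallels P l z"
  proof
    show "pencil P z \<subseteq> line z ` l \<union> parallels P l z"
    proof
      fix \<Lambda> assume \<Lambda>: "\<Lambda> \<in> pencil P z"
      show "\<Lambda> \<in> line z ` l \<union> parallels P l z"
      proof (cases "\<Lambda> \<inter> l = {}")
        case False
        then obtain q where "q \<in> \<Lambda>" "q \<in> l" by blast
        then have "\<Lambda> = line z q"
          using \<Lambda> z(2) line_unique[of \<Lambda> z q] unfolding pencil_def by auto
        with \<open>q \<in> l\<close> show ?thesis by blast
      qed (use \<Lambda> in \<open>auto simp: pencil_def parallels_def\<close>)
    qed
    have "line z q \<in> pencil P z" if "q \<in> l" for q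
    proof -
      have "q \<in> X" "q \<in> P" "q \<noteq> z" using that l Ls_subset_X z(2) by auto
      then show ?thesis
        unfolding pencil_def
        using zX line_in_Ls[OF zX] flat_line_subset[OF P(1) z(1)] by auto
    qed
    moreover have "parallels P l z \<subseteq> pencil P z"
      unfolding parallels_def pencil_def by blast
    ultimately show "line z ` l \<union> parallels P l z \<subseteq> pencil P z" by blast
  qed
  have "inj_on (line z) l"
  proof
    fix q q' assume "q \<in> l" "q' \<in> l" "line z q = line z q'"
    moreover have "q' \<in> line z q'" using mem_line(2)[OF zX] \<open>q' \<in> l\<close> l(1) Ls_subset_X by blast
    ultimately show "q = q'"
      using line_inter_line[OF l(1) \<open>q \<in> l\<close> zX z(2)] by auto
  qed
  then have "card (line z ` l) = 3" using card_line[OF l(1)] by (simp add: card_image)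
  moreover have "line z ` l \<inter> parallels P l z = {}"
    unfolding parallels_def using mem_line(2)[OF zX] l Ls_subset_X by blast
  moreover have "finite (parallels P l z)"
    using finite_pencil[OF P(2), of z] split by simp
  ultimately show ?thesis
    using split card_Un_disjoint card_line[OF l(1)] by (simp add: card_Un_disjoint)
qed

lemma card_flat_parallels:
  assumes "flat X Ls P" "finite P" "l \<in> Ls" "l \<subseteq> P" "z \<in> P" "z \<notin> l"
  shows "card P = 7 + 2 * card (parallels P l z)"
  using card_flat_pencil[OF assms(1,2,5)] card_pencil_parallels[OF assms] by simp

lemma finite_parallels: "finite P \<Longrightarrow> finite (parallels P l z)"
  unfolding parallels_def by (rule finite_subset[of _ "Pow P"]) auto

lemma not_mem_line_thirds:
  assumes l: "l \<in> Ls" "u \<in> l" "v \<in> l" "u \<noteq> v" and z: "z \<in> X" "z \<notin> l"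
  shows "u \<notin> line (third z u) (third z v)"
proof
  assume u: "u \<in> line (third z u) (third z v)"
  have X: "u \<in> X" "v \<in> X" using l Ls_subset_X by auto
  have zu: "z \<noteq> u" "z \<noteq> v" using l z by auto
  have tX: "third z u \<in> X" "third z v \<in> X" using third_in_X z X by auto
  have "third z u \<noteq> third z v" using third_inj[OF z(1) X] l(4) by blast
  moreover have "u \<noteq> third z u" using line_eq_third_distinct[OF z(1) X(1) zu(1)] by simp
  ultimately have "line (third z u) (third z v) = line u (third z u)"
    using line_eq_line[OF tX u] mem_line[OF tX] line_sym by metis
  also have "\<dots> = line z u"
    using line_eq_line[OF z(1) X(1), of u "third z u"] third_mem_line[OF z(1) X(1)]
      \<open>u \<noteq> third z u\<close> z(1) X(1) by simp
  finally have "third z v \<in> line z u" using mem_line(2)[OF tX] by blast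
  moreover have "third z v \<noteq> z" using third_notin_line(2)[OF l(1,3) z] .
  ultimately have "line z (third z v) = line z u"
    using line_eq_line[OF z(1) X(1), of z "third z v"] z(1) X(1) by simp
  then have "v \<in> line z u" using line_third[OF z(1) X(2) zu(2)] mem_line(2)[OF z(1) X(2)] by simp
  then show False using line_inter_line[OF l(1,2) z] l(3,4) by auto
qed

lemma lines_meet_flat7:
  assumes P: "flat X Ls P" "finite P" "card P = 7"
    and lm: "l \<in> Ls" "l \<subseteq> P" "m \<in> Ls" "m \<subseteq> P"
  shows "l \<inter> m \<noteq> {}"
proof
  assume disjoint: "l \<inter> m = {}"
  obtain v where "v \<in> m" using card_line[OF lm(3)] by fastforce
  then have "v \<in> P" "v \<notin> l" using disjoint lm(4) by auto
  then have "parallels P l v = {}"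
    using card_flat_parallels[OF P(1,2) lm(1,2)] P(3) finite_parallels[OF P(2)] by simp
  moreover have "m \<in> parallels P l v"
    unfolding parallels_def using lm(3,4) disjoint \<open>v \<in> m\<close> by blast
  ultimately show False by blast
qed

(* Without parallels the line through third z a and third z b meets l, necessarily in third a b. *)
lemma third_of_thirds_flat7:
  assumes P: "flat X Ls P" "finite P" "card P = 7"
    and l: "l \<in> Ls" "l \<subseteq> P" "a \<in> l" "b \<in> l" "a \<noteq> b" and z: "z \<in> P" "z \<notin> l"
  shows "third (third z a) (third z b) = third a b"
proof -
  have zX: "z \<in> X" using z flat_subset_X[OF P(1)] by blast
  have X: "a \<in> X" "b \<in> X" using l Ls_subset_X by auto
  define \<beta> \<gamma> where "\<beta> = third z a" and "\<gamma> = third z b"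
  have tX: "\<beta> \<in> X" "\<gamma> \<in> X" unfolding \<beta>_def \<gamma>_def using third_in_X zX X by auto
  have "\<beta> \<noteq> \<gamma>" unfolding \<beta>_def \<gamma>_def using third_inj[OF zX X] l(5) by blast
  have tP: "\<beta> \<in> P" "\<gamma> \<in> P" unfolding \<beta>_def \<gamma>_def using flat_third[OF P(1)] z l by blast+
  have tl: "\<beta> \<notin> l" "\<gamma> \<notin> l" unfolding \<beta>_def \<gamma>_def using third_notin_line(1)[OF l(1) _ zX z(2)] l by blast+
  obtain q where q: "q \<in> line \<beta> \<gamma>" "q \<in> l"
    using lines_meet_flat7[OF P line_in_Ls[OF tX \<open>\<beta> \<noteq> \<gamma>\<close>] flat_line_subset[OF P(1) tP] l(1,2)]
    by blast
  have "q \<noteq> a" using not_mem_line_thirds[OF l(1,3,4,5) zX z(2)] q unfolding \<beta>_def \<gamma>_def by blast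
  moreover have "q \<noteq> b"
    using not_mem_line_thirds[OF l(1,4,3) l(5)[symmetric] zX z(2)] q line_sym
    unfolding \<beta>_def \<gamma>_def by metis
  ultimately have "third a b = q"
    using third_unique[OF X] q(2) line_unique[OF l(1,3,4,5)] by simp
  moreover have "third \<beta> \<gamma> = q" using third_unique[OF tX q(1)] q(2) tl by blast
  ultimately show ?thesis unfolding \<beta>_def \<gamma>_def by simp
qed

lemma unique_parallel_flat9:
  assumes P: "flat X Ls P" "finite P" "card P = 9"
    and l: "l \<in> Ls" "l \<subseteq> P" and z: "z \<in> P" "z \<notin> l"
  obtains \<Lambda> where "parallels P l z = {\<Lambda>}"
proof -
  have "card (parallels P l z) = 1" using card_flat_parallels[OF P(1,2) l z] P(3) by simp
  then show ?thesis using card_1_singletonE that by blast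
qed

lemma parallels_disjoint_flat9:
  assumes P: "flat X Ls P" "finite P" "card P = 9" and l: "l \<in> Ls" "l \<subseteq> P"
    and \<Lambda>: "\<Lambda> \<in> parallels P l z" "\<Lambda>' \<in> parallels P l z'" "\<Lambda> \<noteq> \<Lambda>'"
  shows "\<Lambda> \<inter> \<Lambda>' = {}"
proof (rule ccontr)
  assume "\<Lambda> \<inter> \<Lambda>' \<noteq> {}"
  then obtain w where w: "w \<in> \<Lambda>" "w \<in> \<Lambda>'" by blast
  then have "w \<in> P" "w \<notin> l" using \<Lambda>(1) unfolding parallels_def by blast+
  then obtain M where "parallels P l w = {M}" using unique_parallel_flat9[OF P l] by blast
  moreover have "\<Lambda> \<in> parallels P l w" "\<Lambda>' \<in> parallels P l w"
    using \<Lambda>(1,2) w unfolding parallels_def by blast+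
  ultimately show False using \<Lambda>(3) by blast
qed

lemma parallel_meets_line_flat9:
  assumes P: "flat X Ls P" "finite P" "card P = 9"
    and mn: "m \<in> Ls" "m \<subseteq> P" "n \<in> Ls" "n \<subseteq> P" "m \<noteq> n" "c \<in> m" "c \<in> n"
    and \<Lambda>: "\<Lambda> \<in> Ls" "\<Lambda> \<subseteq> P - m"
  shows "\<Lambda> \<inter> n \<noteq> {}"
proof
  assume disjoint: "\<Lambda> \<inter> n = {}"
  have "c \<in> P" "c \<notin> \<Lambda>" using mn \<Lambda>(2) by blast+
  then obtain M where "parallels P \<Lambda> c = {M}"
    using unique_parallel_flat9[OF P \<Lambda>(1)] \<Lambda>(2) by blast
  moreover have "m \<in> parallels P \<Lambda> c" "n \<in> parallels P \<Lambda> c"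
    unfolding parallels_def using mn \<Lambda>(2) disjoint by blast+
  ultimately show False using mn(5) by blast
qed

lemma unique_disjoint_line_flat9:
  assumes P: "flat X Ls P" "finite P" "card P = 9"
    and mn: "m \<in> Ls" "m \<subseteq> P" "n \<in> Ls" "n \<subseteq> P" "m \<noteq> n" "c \<in> m" "c \<in> n"
    and p: "p \<in> P" "p \<notin> m" "p \<notin> n"
  obtains u where "u \<in> n" "\<And>v. v \<in> n \<Longrightarrow> (u = v) \<longleftrightarrow> line v p \<inter> m = {}"
proof -
  have pX: "p \<in> X" using p flat_subset_X[OF P(1)] by blast
  obtain \<Lambda> where \<Lambda>: "parallels P m p = {\<Lambda>}" using unique_parallel_flat9[OF P mn(1,2) p(1,2)] .
  then have \<Lambda>': "\<Lambda> \<in> Ls" "p \<in> \<Lambda>" "\<Lambda> \<subseteq> P - m" unfolding parallels_def by blast+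
  obtain u where u: "u \<in> \<Lambda>" "u \<in> n"
    using parallel_meets_line_flat9[OF P mn \<Lambda>'(1,3)] by blast
  have "(u = v) \<longleftrightarrow> line v p \<inter> m = {}" if v: "v \<in> n" for v
  proof -
    have "v \<in> X" "v \<noteq> p" using v mn(3) Ls_subset_X p(3) by auto
    have vp: "line v p \<in> Ls" "v \<in> line v p" "p \<in> line v p" "line v p \<subseteq> P"
      using line_in_Ls[OF \<open>v \<in> X\<close> pX \<open>v \<noteq> p\<close>] mem_line[OF \<open>v \<in> X\<close> pX]
        flat_line_subset[OF P(1)] mn(4) v p(1) by auto
    then have "line v p \<inter> m = {} \<longleftrightarrow> line v p \<in> parallels P m p"
      unfolding parallels_def by blast
    also have "\<dots> \<longleftrightarrow> v \<in> \<Lambda>"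
      using \<Lambda> line_unique[OF \<Lambda>'(1) _ \<Lambda>'(2) \<open>v \<noteq> p\<close>] vp(2) by auto
    also have "\<dots> \<longleftrightarrow> u = v"
    proof
      assume "v \<in> \<Lambda>"
      show "u = v"
      proof (rule ccontr)
        assume "u \<noteq> v"
        then have "\<Lambda> = n" using line_unique[OF \<Lambda>'(1) u(1) \<open>v \<in> \<Lambda>\<close>] line_unique[OF mn(3) u(2) v] by simp
        then show False using \<Lambda>'(2) p(3) by blast
      qed
    qed (use u(1) in blast)
    finally show ?thesis by blast
  qed
  with u(2) show ?thesis using that by blast
qed

lemma third_notin_parallel:
  assumes "\<Lambda> \<in> parallels P l z" "l \<in> Ls" "u \<in> l"
  shows "third z u \<notin> \<Lambda>"
proof
  assume "third z u \<in> \<Lambda>"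
  have \<Lambda>: "\<Lambda> \<in> Ls" "z \<in> \<Lambda>" "\<Lambda> \<inter> l = {}" using assms(1) unfolding parallels_def by blast+
  then have "z \<in> X" "u \<in> X" "z \<notin> l" using assms(2,3) Ls_subset_X by blast+
  then have "line z (third z u) = \<Lambda>"
    using line_unique[OF \<Lambda>(1,2) \<open>third z u \<in> \<Lambda>\<close>]
      third_notin_line(2)[OF assms(2,3) \<open>z \<in> X\<close> \<open>z \<notin> l\<close>] by simp
  then have "u \<in> \<Lambda>"
    using line_third[OF \<open>z \<in> X\<close> \<open>u \<in> X\<close>] mem_line(2)[OF \<open>z \<in> X\<close> \<open>u \<in> X\<close>] \<open>z \<notin> l\<close> assms(3)
    by auto
  then show False using \<Lambda>(3) assms(3) by blast
qed

lemma flat9_eq_Un: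
  assumes P: "flat X Ls P" "finite P" "card P = 9"
    and l: "l \<in> Ls" "l \<subseteq> P" and z: "z \<in> P" "z \<notin> l" and \<Lambda>: "parallels P l z = {\<Lambda>}"
  shows "P = l \<union> \<Lambda> \<union> third z ` l"
proof (rule card_subset_eq[OF P(2), symmetric])
  have zX: "z \<in> X" using z flat_subset_X[OF P(1)] by blast
  have \<Lambda>': "\<Lambda> \<in> Ls" "\<Lambda> \<subseteq> P - l" using \<Lambda> unfolding parallels_def by blast+
  show "l \<union> \<Lambda> \<union> third z ` l \<subseteq> P"
    using l(2) \<Lambda>'(2) flat_third[OF P(1) z(1)] by blast
  have "inj_on (third z) l" using third_inj[OF zX] l(1) Ls_subset_X by (meson inj_onI subsetD)
  then have "card (third z ` l) = 3" using card_line[OF l(1)] by (simp add: card_image)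
  moreover have "card (l \<union> \<Lambda>) = 6"
    using card_Un_disjoint[of l \<Lambda>] card_line l(1) \<Lambda>' by auto
  moreover have "(l \<union> \<Lambda>) \<inter> third z ` l = {}"
    using third_notin_line(1)[OF l(1) _ zX z(2)] third_notin_parallel[of \<Lambda> P l z] \<Lambda> l(1) by blast
  ultimately show "card (l \<union> \<Lambda> \<union> third z ` l) = card P"
    using card_Un_disjoint[of "l \<union> \<Lambda>" "third z ` l"] card_line l(1) \<Lambda>'(1) P(3) by auto
qed

(* The points third z u with u on l form the parallel to l through third z a. *)
lemma third_of_thirds_flat9:
  assumes P: "flat X Ls P" "finite P" "card P = 9"
    and l: "l \<in> Ls" "l \<subseteq> P" "a \<in> l" "b \<in> l" "a \<noteq> b" and z: "z \<in> P" "z \<notin> l"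
  shows "third (third z a) (third z b) = third z (third a b)"
proof -
  have zX: "z \<in> X" using z flat_subset_X[OF P(1)] by blast
  have X: "a \<in> X" "b \<in> X" using l Ls_subset_X by auto
  define c where "c = third a b"
  have l_eq: "l = {a, b, c}" "c \<noteq> a" "c \<noteq> b"
    using line_eq_third_distinct[OF X l(5)] line_unique[OF l(1,3,4,5)] unfolding c_def by auto
  define \<alpha> \<beta> \<gamma> where "\<alpha> = third z c" and "\<beta> = third z a" and "\<gamma> = third z b"
  have distinct: "\<alpha> \<noteq> \<beta>" "\<alpha> \<noteq> \<gamma>" "\<beta> \<noteq> \<gamma>"
    unfolding \<alpha>_def \<beta>_def \<gamma>_def using third_inj[OF zX] X third_in_X[OF X] l(5) l_eq(2,3) c_def
    by metis+
  have "\<beta> \<in> P" "\<beta> \<notin> l"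
    unfolding \<beta>_def using flat_third[OF P(1)] third_notin_line(1)[OF l(1) _ zX z(2)] z l by blast+
  obtain \<Lambda>z where \<Lambda>z: "parallels P l z = {\<Lambda>z}" using unique_parallel_flat9[OF P l(1,2) z] .
  obtain \<Lambda>\<beta> where \<Lambda>\<beta>: "parallels P l \<beta> = {\<Lambda>\<beta>}"
    using unique_parallel_flat9[OF P l(1,2) \<open>\<beta> \<in> P\<close> \<open>\<beta> \<notin> l\<close>] .
  then have \<Lambda>\<beta>': "\<Lambda>\<beta> \<in> Ls" "\<beta> \<in> \<Lambda>\<beta>" "\<Lambda>\<beta> \<subseteq> P - l" unfolding parallels_def by blast+
  have "\<beta> \<notin> \<Lambda>z" unfolding \<beta>_def using third_notin_parallel[of \<Lambda>z P l z] \<Lambda>z l(1,3) by blast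
  then have "\<Lambda>\<beta> \<inter> \<Lambda>z = {}"
    using parallels_disjoint_flat9[OF P l(1,2), of \<Lambda>\<beta> \<beta> \<Lambda>z z] \<Lambda>\<beta> \<Lambda>z \<Lambda>\<beta>'(2) by blast
  then have "\<Lambda>\<beta> \<subseteq> {\<alpha>, \<beta>, \<gamma>}"
    using \<Lambda>\<beta>'(3) flat9_eq_Un[OF P l(1,2) z \<Lambda>z] l_eq(1) unfolding \<alpha>_def \<beta>_def \<gamma>_def by blast
  then have "\<Lambda>\<beta> = {\<alpha>, \<beta>, \<gamma>}"
    using card_subset_eq[of "{\<alpha>, \<beta>, \<gamma>}" \<Lambda>\<beta>] card_line[OF \<Lambda>\<beta>'(1)] distinct by simp
  then have "line \<beta> \<gamma> = {\<alpha>, \<beta>, \<gamma>}" using line_unique[OF \<Lambda>\<beta>'(1)] distinct(3) by simp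
  then have "third \<beta> \<gamma> = \<alpha>" using third_unique[OF third_in_X third_in_X] zX X distinct
    unfolding \<beta>_def \<gamma>_def by simp
  then show ?thesis unfolding \<alpha>_def \<beta>_def \<gamma>_def c_def .
qed

end

locale regular_steiner_liner = steiner_liner +
  assumes regular: "three_regular X Ls"
begin

lemma fhull_insert:
  assumes "A \<subseteq> X" "finite A" "card A < 3" "c \<in> fhull X Ls A" "q \<in> X - fhull X Ls A"
  shows "fhull X Ls (insert q A) = (\<Union>u\<in>line c q. \<Union>a\<in>fhull X Ls A. line u a)"
  using regular assms unfolding three_regular_def by (elim allE impE) auto

lemma fhull_triangle:
  assumes nc: "noncollinear a b p"
  shows "fhull X Ls {a, b, p} =
    {a, b, third a b, p, third a p, third p b, third p (third a b),
     third (third a p) b, third (third a p) (third a b)}" (is "_ = ?S")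
proof
  have X: "a \<in> X" "b \<in> X" "p \<in> X" using noncollinear_in_X[OF nc] by auto
  have flat: "flat X Ls (fhull X Ls {a, b, p})" using X by (intro flat_fhull) auto
  have "{a, b, p} \<subseteq> fhull X Ls {a, b, p}" by (rule fhull_superset)
  then show "?S \<subseteq> fhull X Ls {a, b, p}" using flat_third[OF flat] by simp
  have "fhull X Ls {a, b, p} = fhull X Ls (insert p {a, b})" by (simp add: insert_commute)
  also have "\<dots> = (\<Union>u\<in>line a p. \<Union>v\<in>line a b. line u v)"
  proof -
    have "p \<notin> fhull X Ls {a, b}" using nc X fhull_pair unfolding noncollinear_def by blast
    then show ?thesis
      using fhull_insert[of "{a, b}" a p] fhull_pair[OF X(1,2)] fhull_superset[of "{a, b}"] X
      by (simp add: card_insert_if)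
  qed
  also have "\<dots> \<subseteq> ?S"
  proof (intro UN_least)
    fix u v assume "u \<in> line a p" "v \<in> line a b"
    then have "u \<in> {a, p, third a p}" "v \<in> {a, b, third a b}" using line_eq_third X by auto
    moreover from this have "u \<in> X" "v \<in> X" using X third_in_X by auto
    ultimately show "line u v \<subseteq> ?S"
      unfolding line_eq_third[OF \<open>u \<in> X\<close> \<open>v \<in> X\<close>]
      using X by (auto simp: third_commute)
  qed
  finally show "fhull X Ls {a, b, p} \<subseteq> ?S" .
qed

lemma finite_fhull_triangle:
  assumes "noncollinear a b p"
  shows "finite (fhull X Ls {a, b, p})" "card (fhull X Ls {a, b, p}) \<le> 9"
proof -
  let ?xs = "[a, b, third a b, p, third a p, third p b, third p (third a b),
    third (third a p) b, third (third a p) (third a b)]"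
  have "fhull X Ls {a, b, p} = set ?xs" using fhull_triangle[OF assms] by simp
  then show "finite (fhull X Ls {a, b, p})" "card (fhull X Ls {a, b, p}) \<le> 9"
    using card_length[of ?xs] by simp_all
qed

lemma flat_fhull_triangle: "noncollinear a b p \<Longrightarrow> flat X Ls (fhull X Ls {a, b, p})"
  using noncollinear_in_X by (intro flat_fhull) auto

lemma line_subset_fhull_triangle:
  "noncollinear a b p \<Longrightarrow> line a b \<subseteq> fhull X Ls {a, b, p}"
  using flat_line_subset[OF flat_fhull_triangle] fhull_superset by blast

lemma mem_fhull_triangle_exchange:
  assumes nc: "noncollinear a b p" and q: "q \<in> fhull X Ls {a, b, p}" "q \<notin> line a b"
  shows "p \<in> fhull X Ls {a, b, q}"
proof -
  have X: "a \<in> X" "b \<in> X" "p \<in> X" using noncollinear_in_X[OF nc] by auto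
  have "q \<in> X" using q flat_subset_X[OF flat_fhull_triangle[OF nc]] by blast
  with nc q(2) have nc': "noncollinear a b q" by (simp add: noncollinear_def)
  let ?H = "fhull X Ls {a, b, q}"
  have flat: "flat X Ls ?H" by (rule flat_fhull_triangle[OF nc'])
  have abq: "a \<in> ?H" "b \<in> ?H" "q \<in> ?H" using fhull_superset[of "{a, b, q}"] by auto
  have c: "third a b \<in> ?H" using flat_third[OF flat abq(1,2)] .
  have "q \<in> {p, third a p, third p b, third p (third a b), third (third a p) b,
      third (third a p) (third a b)}"
    using q fhull_triangle[OF nc] line_eq_third[OF X(1,2)] by auto
  then show "p \<in> ?H"
  proof (elim insertE emptyE)
    assume "q = third a p"
    then have "third a q = p" using X by simp
    then show ?thesis using flat_third[OF flat abq(1,3)] by simp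
  next
    assume "q = third p b"
    then have "third b q = p" using X third_commute[of p b] by simp
    then show ?thesis using flat_third[OF flat abq(2,3)] by simp
  next
    assume "q = third p (third a b)"
    then have "third (third a b) q = p"
      using X third_in_X[OF X(1,2)] third_commute[of p "third a b"] by simp
    then show ?thesis using flat_third[OF flat c abq(3)] by simp
  next
    assume "q = third (third a p) b"
    then have "third b q = third a p"
      using X third_in_X[OF X(1,3)] third_commute[of "third a p" b] by simp
    then have "third a (third b q) = p" using X by simp
    then show ?thesis using flat_third[OF flat abq(1) flat_third[OF flat abq(2,3)]] by simp
  next
    assume "q = third (third a p) (third a b)"
    then have "third (third a b) q = third a p"
      using third_in_X[OF X(1,3)] third_in_X[OF X(1,2)] third_commute[of "third a p" "third a b"]
      by simp
    then have "third a (third (third a b) q) = p" using X by simp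
    then show ?thesis using flat_third[OF flat abq(1) flat_third[OF flat c abq(3)]] by simp
  qed (use abq in simp)
qed

lemma fhull_triangle_exchange:
  assumes nc: "noncollinear a b p" and q: "q \<in> fhull X Ls {a, b, p}" "q \<notin> line a b"
  shows "fhull X Ls {a, b, q} = fhull X Ls {a, b, p}"
proof
  have "q \<in> X" using q flat_subset_X[OF flat_fhull_triangle[OF nc]] by blast
  with nc q(2) have nc': "noncollinear a b q" by (simp add: noncollinear_def)
  show "fhull X Ls {a, b, p} \<subseteq> fhull X Ls {a, b, q}"
    using fhull_least[OF flat_fhull_triangle[OF nc']] mem_fhull_triangle_exchange[OF nc q]
      fhull_superset[of "{a, b, q}"] by simp
  show "fhull X Ls {a, b, q} \<subseteq> fhull X Ls {a, b, p}"
    using fhull_least[OF flat_fhull_triangle[OF nc]] q(1) fhull_superset[of "{a, b, p}"] by simp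
qed

lemma fhull_triangle_through_point:
  assumes nc: "noncollinear u v w" and a: "a \<in> fhull X Ls {u, v, w}"
  obtains v' w' where "noncollinear a v' w'" "fhull X Ls {a, v', w'} = fhull X Ls {u, v, w}"
proof -
  have X: "u \<in> X" "v \<in> X" "w \<in> X" using noncollinear_in_X[OF nc] by auto
  have "a \<in> X" using a flat_subset_X[OF flat_fhull_triangle[OF nc]] by blast
  consider "a \<notin> line v w" | "a \<notin> line u w" | "a = w"
  proof (cases "a = w")
    case False
    have "line v w \<noteq> line u w" using nc X noncollinear_perms(4)[OF nc] line_sym
      unfolding noncollinear_def by (metis mem_line(1))
    then have "a \<notin> line v w \<or> a \<notin> line u w"
      using line_eq_line_through[OF X(3) X(2), of a] line_eq_line_through[OF X(3) X(1), of a]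
        False line_sym by metis
    then show ?thesis using that by blast
  qed
  then show ?thesis
  proof cases
    case 1
    have "noncollinear v w a" using noncollinear_perms(4)[OF nc] 1 \<open>a \<in> X\<close>
      by (simp add: noncollinear_def)
    moreover have "fhull X Ls {v, w, a} = fhull X Ls {v, w, u}"
      using fhull_triangle_exchange[OF noncollinear_perms(4)[OF nc], of a] a 1
      by (simp add: insert_commute)
    ultimately show ?thesis
      using that[of v w] noncollinear_perms(3) by (simp add: insert_commute)
  next
    case 2
    have "noncollinear u w a" using noncollinear_perms(2)[OF nc] 2 \<open>a \<in> X\<close>
      by (simp add: noncollinear_def)
    moreover have "fhull X Ls {u, w, a} = fhull X Ls {u, w, v}"
      using fhull_triangle_exchange[OF noncollinear_perms(2)[OF nc], of a] a 2
      by (simp add: insert_commute)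
    ultimately show ?thesis
      using that[of u w] noncollinear_perms(3) by (simp add: insert_commute)
  next
    case 3
    then show ?thesis
      using that[of u v] noncollinear_perms(3)[OF nc] by (simp add: insert_commute)
  qed
qed

lemma fhull_triangle_through_side:
  assumes nc: "noncollinear a v w" and b: "b \<in> fhull X Ls {a, v, w}" "b \<noteq> a"
  obtains w' where "noncollinear a b w'" "fhull X Ls {a, b, w'} = fhull X Ls {a, v, w}"
proof -
  have X: "a \<in> X" "v \<in> X" "w \<in> X" using noncollinear_in_X[OF nc] by auto
  have "b \<in> X" using b flat_subset_X[OF flat_fhull_triangle[OF nc]] by blast
  show ?thesis
  proof (cases "b \<in> line a v")
    case False
    then have "noncollinear a v b" using nc \<open>b \<in> X\<close> by (simp add: noncollinear_def)
    moreover have "fhull X Ls {a, v, b} = fhull X Ls {a, v, w}"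
      using fhull_triangle_exchange[OF nc b(1) False] .
    ultimately show ?thesis
      using that[of v] noncollinear_perms(2) by (simp add: insert_commute)
  next
    case True
    have "b \<notin> line a w"
    proof
      assume "b \<in> line a w"
      then have "line a v = line a w"
        using line_eq_line_through[OF X(1,2) True b(2)] line_eq_line_through[OF X(1,3) _ b(2)]
        by simp
      then show False using nc X by (simp add: noncollinear_def)
    qed
    then have "noncollinear a w b" using noncollinear_perms(2)[OF nc] \<open>b \<in> X\<close>
      by (simp add: noncollinear_def)
    moreover have "fhull X Ls {a, w, b} = fhull X Ls {a, w, v}"
      using fhull_triangle_exchange[OF noncollinear_perms(2)[OF nc], of b] b \<open>b \<notin> line a w\<close>
      by (simp add: insert_commute)
    ultimately show ?thesis
      using that[of w] noncollinear_perms(2) by (simp add: insert_commute)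
  qed
qed

lemma fhull_triangle_eq:
  assumes nc: "noncollinear u v w" and nc': "noncollinear a b p"
    and abp: "{a, b, p} \<subseteq> fhull X Ls {u, v, w}"
  shows "fhull X Ls {a, b, p} = fhull X Ls {u, v, w}"
proof -
  obtain v' w' where 1: "noncollinear a v' w'" "fhull X Ls {a, v', w'} = fhull X Ls {u, v, w}"
    using fhull_triangle_through_point[OF nc] abp by auto
  obtain w'' where 2: "noncollinear a b w''" "fhull X Ls {a, b, w''} = fhull X Ls {u, v, w}"
    using fhull_triangle_through_side[OF 1(1)] abp noncollinear_distinct(1)[OF nc'] 1(2) by auto
  have "p \<notin> line a b" using nc' by (simp add: noncollinear_def)
  then show ?thesis using fhull_triangle_exchange[OF 2(1)] abp 2(2) by auto
qed

lemma plane_eq_fhull_triangle: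
  assumes "plane X Ls P"
  obtains a b p where "noncollinear a b p" "P = fhull X Ls {a, b, p}"
proof -
  have flat: "flat X Ls P" and rank: "has_rank X Ls P 3" using assms unfolding plane_def by auto
  have small: "\<not> P \<subseteq> fhull X Ls B" if "B \<subseteq> X" "finite B" "card B < 3" for B
  proof
    assume "P \<subseteq> fhull X Ls B"
    with rank that(1,2) have "3 \<le> card B" unfolding has_rank_def by blast
    with that(3) show False by simp
  qed
  obtain B where B: "B \<subseteq> X" "card B = 3" "P \<subseteq> fhull X Ls B"
    using rank unfolding has_rank_def by blast
  then obtain u v w where B_eq: "B = {u, v, w}" "u \<noteq> v" "v \<noteq> w" "u \<noteq> w"
    unfolding card_3_iff by blast
  then have uvw: "u \<in> X" "v \<in> X" "w \<in> X" using B(1) by auto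
  have nc: "noncollinear u v w"
  proof (rule ccontr)
    assume "\<not> noncollinear u v w"
    then have "w \<in> line u v" using uvw B_eq(2) unfolding noncollinear_def by blast
    then have "B \<subseteq> line u v" using B_eq(1) mem_line[OF uvw(1,2)] by blast
    then have "P \<subseteq> fhull X Ls {u, v}"
      using B(3) fhull_least[OF flat_line[OF uvw(1,2)]] fhull_pair[OF uvw(1,2)] by blast
    moreover have "card {u, v} < 3" by (simp add: card_insert_if)
    ultimately show False using small[of "{u, v}"] uvw by blast
  qed
  have "P \<noteq> {}" using small[of "{}"] by auto
  then obtain a where a: "a \<in> P" by blast
  then have aX: "a \<in> X" using flat_subset_X[OF flat] by blast
  have "\<not> P \<subseteq> {a}" using small[of "{a}"] fhull_pair[OF aX aX] aX by simp
  then obtain b where b: "b \<in> P" "b \<noteq> a" by blast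
  then have bX: "b \<in> X" using flat_subset_X[OF flat] by blast
  have "card {a, b} < 3" by (simp add: card_insert_if)
  then have "\<not> P \<subseteq> line a b" using small[of "{a, b}"] fhull_pair[OF aX bX] aX bX by simp
  then obtain p where p: "p \<in> P" "p \<notin> line a b" by blast
  then have nc': "noncollinear a b p"
    using aX bX b(2) flat_subset_X[OF flat] unfolding noncollinear_def by blast
  have "fhull X Ls {a, b, p} \<subseteq> P" using fhull_least[OF flat] a b(1) p(1) by simp
  moreover have "{a, b, p} \<subseteq> fhull X Ls {u, v, w}" using a b(1) p(1) B(3) B_eq(1) by blast
  then have "fhull X Ls {a, b, p} = fhull X Ls {u, v, w}" by (rule fhull_triangle_eq[OF nc nc'])
  ultimately show ?thesis using that[OF nc'] B(3) B_eq(1) by blast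
qed

lemma card_fhull_triangle:
  assumes nc: "noncollinear a b p"
  shows "card (fhull X Ls {a, b, p}) \<in> {7, 9}"
proof -
  let ?P = "fhull X Ls {a, b, p}"
  have X: "a \<in> X" "b \<in> X" "p \<in> X" and "a \<noteq> b"
    using noncollinear_in_X[OF nc] noncollinear_distinct[OF nc] by auto
  have "card ?P = 7 + 2 * card (parallels ?P (line a b) p)"
    using card_flat_parallels[OF flat_fhull_triangle[OF nc] finite_fhull_triangle(1)[OF nc]
        line_in_Ls[OF X(1,2) \<open>a \<noteq> b\<close>] line_subset_fhull_triangle[OF nc]]
      fhull_superset[of "{a, b, p}"] nc
    by (simp add: noncollinear_def)
  moreover have "card ?P \<le> 9" using finite_fhull_triangle(2)[OF nc] .
  ultimately have "card (parallels ?P (line a b) p) \<in> {0, 1}" by auto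
  with \<open>card ?P = _\<close> show ?thesis by auto
qed

end

(*
  A 7-point plane P and a 9-point plane Q through the line L = ab are contradictory.  With
  z = third x y, the plane R spanned by x and the points third i y (i on L) avoids L and all
  points third i x; this forces every plane through x, y and a point of L to have 7 points,
  and then the plane spanned by third a x, third b x and z is Q, putting third a x into
  P \<inter> Q \<subseteq> L.
*)
locale mixed_planes_on_line = regular_steiner_liner +
  fixes a b x y :: 'a
  assumes noncollinear_x: "noncollinear a b x" and noncollinear_y: "noncollinear a b y"
    and card_P: "card (fhull X Ls {a, b, x}) = 7" and card_Q: "card (fhull X Ls {a, b, y}) = 9"
begin

abbreviation "P \<equiv> fhull X Ls {a, b, x}"
abbreviation "Q \<equiv> fhull X Ls {a, b, y}"
abbreviation "L \<equiv> line a b"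
abbreviation "c \<equiv> third a b"
abbreviation "z \<equiv> third x y"

lemma in_X: "a \<in> X" "b \<in> X" "x \<in> X" "y \<in> X" "c \<in> X"
  using noncollinear_in_X[OF noncollinear_x] noncollinear_in_X[OF noncollinear_y] third_in_X
  by auto

lemma a_neq_b: "a \<noteq> b"
  using noncollinear_distinct(1)[OF noncollinear_x] .

lemma L_in_Ls: "L \<in> Ls"
  using line_in_Ls[OF in_X(1,2) a_neq_b] .

lemma L_eq: "L = {a, b, c}" "c \<noteq> a" "c \<noteq> b"
  using line_eq_third_distinct[OF in_X(1,2) a_neq_b] by auto

lemma in_X_of_L: "i \<in> L \<Longrightarrow> i \<in> X"
  using Ls_subset_X[OF L_in_Ls] by blast

lemma flat_P: "flat X Ls P" and flat_Q: "flat X Ls Q"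
  using flat_fhull_triangle[OF noncollinear_x] flat_fhull_triangle[OF noncollinear_y] .

lemma L_subset: "L \<subseteq> P" "L \<subseteq> Q"
  using line_subset_fhull_triangle[OF noncollinear_x] line_subset_fhull_triangle[OF noncollinear_y] .

lemma x_in_P: "x \<in> P" "x \<notin> L" and y_in_Q: "y \<in> Q" "y \<notin> L"
  using fhull_superset[of "{a, b, x}"] fhull_superset[of "{a, b, y}"] noncollinear_x noncollinear_y
  by (auto simp: noncollinear_def)

lemma P_inter_Q: "q \<in> P \<Longrightarrow> q \<in> Q \<Longrightarrow> q \<in> L"
  using fhull_triangle_exchange[OF noncollinear_x, of q] fhull_triangle_exchange[OF noncollinear_y, of q]
    card_P card_Q by force

lemma x_notin_Q: "x \<notin> Q" and y_notin_P: "y \<notin> P"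
  using P_inter_Q x_in_P y_in_Q by blast+

lemma third_thirds_x:
  assumes "i \<in> L" "j \<in> L" "i \<noteq> j"
  shows "third (third i x) (third j x) = third i j"
  using third_of_thirds_flat7[OF flat_P finite_fhull_triangle(1)[OF noncollinear_x] card_P
      L_in_Ls L_subset(1) assms x_in_P]
  by (simp add: third_commute[of x])

lemma third_thirds_y:
  assumes "i \<in> L" "j \<in> L" "i \<noteq> j"
  shows "third (third i y) (third j y) = third y (third i j)"
  using third_of_thirds_flat9[OF flat_Q finite_fhull_triangle(1)[OF noncollinear_y] card_Q
      L_in_Ls L_subset(2) assms y_in_Q]
  by (simp add: third_commute[of y])

lemma third_x_in_P: "i \<in> L \<Longrightarrow> third i x \<in> P - L"
  using flat_third[OF flat_P] L_subset(1) x_in_P third_notin_line(1)[OF L_in_Ls _ in_X(3) x_in_P(2)]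
  by (auto simp: third_commute[of x])

lemma third_y_in_Q: "i \<in> L \<Longrightarrow> third i y \<in> Q - L"
  using flat_third[OF flat_Q] L_subset(2) y_in_Q third_notin_line(1)[OF L_in_Ls _ in_X(4) y_in_Q(2)]
  by (auto simp: third_commute[of y])

lemma z_notin: "z \<notin> P" "z \<notin> Q"
proof -
  show "z \<notin> P"
  proof
    assume "z \<in> P"
    then have "third x z \<in> P" using flat_third[OF flat_P x_in_P(1)] by blast
    then show False using y_notin_P in_X(3,4) by simp
  qed
  show "z \<notin> Q"
  proof
    assume "z \<in> Q"
    then have "third y z \<in> Q" using flat_third[OF flat_Q y_in_Q(1)] by blast
    then show False using x_notin_Q in_X(3,4) third_commute[of x y] by simp
  qed
qed

lemma noncollinear_pencil:
  assumes "i \<in> L"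
  shows "noncollinear i x y" "i \<notin> line x y"
proof -
  have "i \<noteq> x" using assms x_in_P(2) by blast
  have "line i x \<subseteq> P" using flat_line_subset[OF flat_P] assms L_subset(1) x_in_P(1) by blast
  then have "y \<notin> line i x" using y_notin_P by blast
  then show nc: "noncollinear i x y"
    using in_X_of_L[OF assms] in_X \<open>i \<noteq> x\<close> by (simp add: noncollinear_def)
  show "i \<notin> line x y"
    using noncollinear_perms(4)[OF nc] by (simp add: noncollinear_def)
qed

lemma pencil_plane:
  assumes "i \<in> L"
  shows "flat X Ls (fhull X Ls {i, x, y})" "finite (fhull X Ls {i, x, y})"
    "line x y \<subseteq> fhull X Ls {i, x, y}" "i \<in> fhull X Ls {i, x, y}"
proof -
  note nc = noncollinear_pencil(1)[OF assms]
  show "flat X Ls (fhull X Ls {i, x, y})" using flat_fhull_triangle[OF nc] .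
  show "finite (fhull X Ls {i, x, y})" using finite_fhull_triangle(1)[OF nc] .
  show "line x y \<subseteq> fhull X Ls {i, x, y}"
    using line_subset_fhull_triangle[OF noncollinear_perms(4)[OF nc]] by (simp add: insert_commute)
  show "i \<in> fhull X Ls {i, x, y}" using fhull_superset[of "{i, x, y}"] by simp
qed

lemma x_neq_y: "x \<noteq> y"
  using x_in_P(1) y_notin_P by blast

lemma third_pencil_7:
  assumes "i \<in> L" "card (fhull X Ls {i, x, y}) = 7"
  shows "third (third i x) (third i y) = z"
  using third_of_thirds_flat7[OF pencil_plane(1,2)[OF assms(1)] assms(2)
      line_in_Ls[OF in_X(3,4) x_neq_y] pencil_plane(3)[OF assms(1)] mem_line[OF in_X(3,4)]
      x_neq_y pencil_plane(4)[OF assms(1)] noncollinear_pencil(2)[OF assms(1)]] .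

lemma third_pencil_9:
  assumes "i \<in> L" "card (fhull X Ls {i, x, y}) = 9"
  shows "third (third i x) (third i y) = third i z"
  using third_of_thirds_flat9[OF pencil_plane(1,2)[OF assms(1)] assms(2)
      line_in_Ls[OF in_X(3,4) x_neq_y] pencil_plane(3)[OF assms(1)] mem_line[OF in_X(3,4)]
      x_neq_y pencil_plane(4)[OF assms(1)] noncollinear_pencil(2)[OF assms(1)]] .

lemma third_z_pencil_7:
  assumes "i \<in> L" "card (fhull X Ls {i, x, y}) = 7"
  shows "third z (third i x) = third i y"
  using third_pencil_7[OF assms] third_in_X in_X in_X_of_L[OF assms(1)]
  by (metis third_commute third_third)

lemma third_z_pencil_9:
  assumes "i \<in> L" "card (fhull X Ls {i, x, y}) = 9"
  shows "third z (third i x) = third x (third i y)"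
proof -
  have iX: "i \<in> X" using in_X_of_L[OF assms(1)] .
  have "i \<noteq> y" using assms(1) y_in_Q(2) by blast
  have "line i y \<subseteq> Q" using flat_line_subset[OF flat_Q] assms(1) L_subset(2) y_in_Q(1) by blast
  then have "x \<notin> line i y" using x_notin_Q by blast
  moreover have "line i y \<subseteq> fhull X Ls {i, x, y}"
    using flat_line_subset[OF pencil_plane(1)[OF assms(1)]] fhull_superset[of "{i, x, y}"] by simp
  moreover have "x \<in> fhull X Ls {i, x, y}" using fhull_superset[of "{i, x, y}"] by simp
  ultimately have "third (third x i) (third x y) = third x (third i y)"
    using third_of_thirds_flat9[OF pencil_plane(1,2)[OF assms(1)] assms(2)
        line_in_Ls[OF iX in_X(4) \<open>i \<noteq> y\<close>]] mem_line[OF iX in_X(4)] \<open>i \<noteq> y\<close>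
    by blast
  then show ?thesis by (simp add: third_commute)
qed

abbreviation "R \<equiv> fhull X Ls {x, third a y, third b y}"

lemma third_y_inj: "i \<in> L \<Longrightarrow> j \<in> L \<Longrightarrow> i \<noteq> j \<Longrightarrow> third i y \<noteq> third j y"
  using third_inj[OF in_X(4) in_X_of_L in_X_of_L] third_commute[of y] by metis

lemma noncollinear_R: "noncollinear x (third a y) (third b y)"
proof -
  have ab: "a \<in> L" "b \<in> L" using mem_line[OF in_X(1,2)] by auto
  have X: "third a y \<in> X" "third b y \<in> X" using third_in_X in_X by auto
  have "line (third a y) (third b y) \<subseteq> Q"
    using flat_line_subset[OF flat_Q] third_y_in_Q ab by blast
  then have "noncollinear (third a y) (third b y) x"
    using x_notin_Q X in_X(3) third_y_inj[OF ab a_neq_b] by (auto simp: noncollinear_def)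
  then show ?thesis using noncollinear_perms(3) by blast
qed

lemma flat_R: "flat X Ls R"
  using flat_fhull_triangle[OF noncollinear_R] .

lemma x_in_R: "x \<in> R"
  using fhull_superset[of "{x, third a y, third b y}"] by simp

lemma third_y_in_R: "i \<in> L \<Longrightarrow> third i y \<in> R"
proof -
  assume "i \<in> L"
  have ab: "a \<in> L" "b \<in> L" "third a y \<in> R" "third b y \<in> R"
    using mem_line[OF in_X(1,2)] fhull_superset[of "{x, third a y, third b y}"] by auto
  then have "third y c \<in> R"
    using flat_third[OF flat_R ab(3,4)] third_thirds_y[OF ab(1,2) a_neq_b] by simp
  then show "third i y \<in> R" using \<open>i \<in> L\<close> ab(3,4) L_eq(1) third_commute[of y c] by auto
qed

lemma third_z_third_x_in_R: "i \<in> L \<Longrightarrow> third z (third i x) \<in> R"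
  using card_fhull_triangle[OF noncollinear_pencil(1)] third_z_pencil_7 third_z_pencil_9
    third_y_in_R flat_third[OF flat_R x_in_R third_y_in_R] by fastforce

lemma L_disjoint_R: "i \<in> L \<Longrightarrow> i \<notin> R"
proof
  assume i: "i \<in> L" "i \<in> R"
  have iX: "i \<in> X" using in_X_of_L[OF i(1)] .
  have "y \<in> R" using flat_third[OF flat_R i(2) third_y_in_R[OF i(1)]] iX in_X(4) by simp
  obtain j where j: "j \<in> L" "j \<noteq> i" using L_eq by blast
  then have jX: "j \<in> X" using in_X_of_L by blast
  have "j \<in> R"
    using flat_third[OF flat_R \<open>y \<in> R\<close> third_y_in_R[OF j(1)]] jX in_X(4) third_commute[of j y]
    by simp
  have "line i j = L" using line_unique[OF L_in_Ls i(1) j(1) j(2)[symmetric]] .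
  then have nc: "noncollinear i j y"
    using iX jX in_X(4) j(2) y_in_Q(2) by (simp add: noncollinear_def)
  have "fhull X Ls {i, j, y} = R"
    using fhull_triangle_eq[OF noncollinear_R nc] i(2) \<open>j \<in> R\<close> \<open>y \<in> R\<close> by simp
  moreover have "fhull X Ls {i, j, y} = Q"
    using fhull_triangle_eq[OF noncollinear_y nc] i(1) j(1) L_subset(2) y_in_Q(1) by auto
  ultimately show False using x_in_R x_notin_Q by simp
qed

lemma third_x_notin_R: "i \<in> L \<Longrightarrow> third i x \<notin> R"
proof
  assume i: "i \<in> L" "third i x \<in> R"
  then have "third x (third i x) \<in> R" using flat_third[OF flat_R x_in_R] by blast
  then show False
    using L_disjoint_R[OF i(1)] in_X_of_L[OF i(1)] in_X(3) third_commute[of i x] by simp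
qed

lemma L_split:
  assumes "i \<in> L"
  obtains j k where "j \<in> L" "k \<in> L" "j \<noteq> k" "i \<noteq> j" "i \<noteq> k" "third j k = i"
proof -
  obtain j k where jk: "L = {i, j, k}" "i \<noteq> j" "i \<noteq> k" "j \<noteq> k"
  proof -
    from assms L_eq(1) consider "i = a" | "i = b" | "i = c" by auto
    then show ?thesis
    proof cases
      case 1
      then show ?thesis using that[of b c] L_eq a_neq_b by auto
    next
      case 2
      then show ?thesis using that[of a c] L_eq a_neq_b by auto
    next
      case 3
      then show ?thesis using that[of a b] L_eq a_neq_b by auto
    qed
  qed
  then have "third j k = i"
    using third_unique[OF in_X_of_L in_X_of_L, of j k i] line_unique[OF L_in_Ls, of j k] by auto
  with jk that show ?thesis by auto
qed

lemma third_z_in_R: "i \<in> L \<Longrightarrow> third z i \<in> R"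
proof -
  assume i: "i \<in> L"
  obtain j k where jk: "j \<in> L" "k \<in> L" "j \<noteq> k" "i \<noteq> j" "i \<noteq> k" "third j k = i"
    using L_split[OF i] .
  have iX: "i \<in> X" using in_X_of_L[OF i] .
  have P: "third j x \<in> P - L" "third k x \<in> P - L" using third_x_in_P jk(1,2) by auto
  then have X: "third j x \<in> X" "third k x \<in> X" using flat_subset_X[OF flat_P] by blast+
  have jk_x: "third (third j x) (third k x) = i" using third_thirds_x[OF jk(1-3)] jk(6) by simp
  have "third j x \<noteq> third k x" using third_inj[OF in_X(3)] jk X in_X_of_L third_commute[of x] by metis
  have "i \<noteq> third j x" using P i by blast
  let ?l = "line i (third j x)"
  have l: "?l \<in> Ls" "third j x \<in> ?l" "third k x \<in> ?l"
    using line_in_Ls[OF iX X(1) \<open>i \<noteq> third j x\<close>] mem_line[OF iX X(1)]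
      third_mem_line[OF X(1) iX] third_swap[OF X jk_x] line_sym third_commute by metis+
  have "?l \<subseteq> P" using flat_line_subset[OF flat_P] i L_subset(1) P by blast
  then have nc: "noncollinear i (third j x) z"
    using iX X(1) third_in_X[OF in_X(3,4)] \<open>i \<noteq> third j x\<close> z_notin(1)
    by (auto simp: noncollinear_def)
  let ?Z = "fhull X Ls {i, third j x, z}"
  have Z: "flat X Ls ?Z" "finite ?Z" "?l \<subseteq> ?Z" "z \<in> ?Z" "z \<notin> ?l"
    using flat_fhull_triangle[OF nc] finite_fhull_triangle(1)[OF nc]
      line_subset_fhull_triangle[OF nc] fhull_superset[of "{i, third j x, z}"] nc
    by (auto simp: noncollinear_def)
  have zR: "third z (third j x) \<in> R" "third z (third k x) \<in> R" using third_z_third_x_in_R jk(1,2) by auto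
  consider "card ?Z = 7" | "card ?Z = 9" using card_fhull_triangle[OF nc] by auto
  then show ?thesis
  proof cases
    case 1
    then have "third (third z (third j x)) (third z (third k x)) = i"
      using third_of_thirds_flat7[OF Z(1,2) 1 l(1) Z(3) l(2,3) \<open>third j x \<noteq> third k x\<close> Z(4,5)]
        jk_x by simp
    then show ?thesis using flat_third[OF flat_R zR] L_disjoint_R[OF i] by simp
  next
    case 2
    then have "third (third z (third j x)) (third z (third k x)) = third z i"
      using third_of_thirds_flat9[OF Z(1,2) 2 l(1) Z(3) l(2,3) \<open>third j x \<noteq> third k x\<close> Z(4,5)]
        jk_x by simp
    then show ?thesis using flat_third[OF flat_R zR] by simp
  qed
qed

lemma card_pencil_plane: "i \<in> L \<Longrightarrow> card (fhull X Ls {i, x, y}) = 7"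
proof (rule ccontr)
  assume i: "i \<in> L" and "card (fhull X Ls {i, x, y}) \<noteq> 7"
  then have "card (fhull X Ls {i, x, y}) = 9"
    using card_fhull_triangle[OF noncollinear_pencil(1)[OF i]] by auto
  then have "third (third i x) (third i y) = third z i"
    using third_pencil_9[OF i] third_commute[of i z] by simp
  then have "third (third z i) (third i y) = third i x"
    using third_swap third_in_X in_X in_X_of_L[OF i] third_commute by metis
  then have "third i x \<in> R" using flat_third[OF flat_R third_z_in_R[OF i] third_y_in_R[OF i]] by simp
  then show False using third_x_notin_R[OF i] by blast
qed

lemma inconsistent: False
proof -
  have ab: "a \<in> L" "b \<in> L" using mem_line[OF in_X(1,2)] by auto
  have xX: "third a x \<in> X" "third b x \<in> X" "third a y \<in> X" "third b y \<in> X"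
    using third_in_X in_X by auto
  have z: "third (third a x) (third a y) = z" "third (third b x) (third b y) = z"
    using third_pencil_7 card_pencil_plane ab by auto
  have "third a x \<noteq> third b x" using third_inj[OF in_X(3) in_X(1,2)] a_neq_b third_commute[of x] by metis
  moreover have "line (third a x) (third b x) \<subseteq> P"
    using flat_line_subset[OF flat_P] third_x_in_P ab by blast
  ultimately have nc: "noncollinear (third a x) (third b x) z"
    using xX third_in_X[OF in_X(3,4)] z_notin(1) by (auto simp: noncollinear_def)
  let ?G = "fhull X Ls {third a x, third b x, z}"
  have G: "third a x \<in> ?G" "third b x \<in> ?G" "z \<in> ?G"
    using fhull_superset[of "{third a x, third b x, z}"] by auto
  have sub: "{third a y, third b y, c} \<subseteq> ?G"
    using flat_third[OF flat_fhull_triangle[OF nc]] G third_swap[OF xX(1,3) z(1)]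
      third_swap[OF xX(2,4) z(2)] third_thirds_x[OF ab a_neq_b] by fastforce
  have nc': "noncollinear (third a y) (third b y) c"
  proof -
    have "c \<in> L" using L_eq by blast
    have "line (third a y) (third b y) = {third a y, third b y, third c y}"
      using line_eq_third[OF xX(3,4)] third_thirds_y[OF ab a_neq_b] third_commute[of y c] by simp
    moreover have "third i y \<noteq> c" if "i \<in> L" for i
      using third_y_in_Q[OF that] \<open>c \<in> L\<close> by (metis DiffD2)
    ultimately have "c \<notin> line (third a y) (third b y)" using ab \<open>c \<in> L\<close> by (metis insertE empty_iff)
    then show ?thesis
      using xX(3,4) in_X(5) third_y_inj[OF ab a_neq_b] by (simp add: noncollinear_def)
  qed
  have "fhull X Ls {third a y, third b y, c} = ?G" using fhull_triangle_eq[OF nc nc' sub] .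
  moreover have "fhull X Ls {third a y, third b y, c} = Q"
    using fhull_triangle_eq[OF noncollinear_y nc'] third_y_in_Q ab L_subset(2) L_eq(1) by auto
  ultimately have "third a x \<in> Q" using G by simp
  then show False using P_inter_Q third_x_in_P ab by blast
qed

end

context regular_steiner_liner
begin

lemma card_fhull_triangle_on_line:
  assumes "noncollinear a b x" "noncollinear a b y"
  shows "card (fhull X Ls {a, b, x}) = card (fhull X Ls {a, b, y})"
proof (rule ccontr)
  assume "card (fhull X Ls {a, b, x}) \<noteq> card (fhull X Ls {a, b, y})"
  with card_fhull_triangle[OF assms(1)] card_fhull_triangle[OF assms(2)]
  consider "card (fhull X Ls {a, b, x}) = 7" "card (fhull X Ls {a, b, y}) = 9"
    | "card (fhull X Ls {a, b, y}) = 7" "card (fhull X Ls {a, b, x}) = 9" by auto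
  then show False
  proof cases
    case 1
    then interpret mixed_planes_on_line X Ls a b x y using assms by unfold_locales
    show False by (rule inconsistent)
  next
    case 2
    then interpret mixed_planes_on_line X Ls a b y x using assms by unfold_locales
    show False by (rule inconsistent)
  qed
qed

lemma ex_triangle_at_point_same_card:
  assumes nc: "noncollinear a b c" and d: "d \<in> X"
  obtains u v where "noncollinear d u v" "card (fhull X Ls {d, u, v}) = card (fhull X Ls {a, b, c})"
proof (cases "d \<in> fhull X Ls {a, b, c}")
  case True
  then show ?thesis using fhull_triangle_through_point[OF nc] that by metis
next
  case False
  then have "d \<notin> line a b" using line_subset_fhull_triangle[OF nc] by blast
  then have nc': "noncollinear a b d" using nc d by (simp add: noncollinear_def)
  then have "card (fhull X Ls {d, a, b}) = card (fhull X Ls {a, b, c})"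
    using card_fhull_triangle_on_line[OF nc' nc] by (simp add: insert_commute)
  then show ?thesis using that noncollinear_perms(3)[OF nc'] by blast
qed

lemma ex_triangle_on_line_same_card:
  assumes nc: "noncollinear a b c" and de: "d \<in> X" "e \<in> X" "d \<noteq> e"
  obtains w where "noncollinear d e w" "card (fhull X Ls {d, e, w}) = card (fhull X Ls {a, b, c})"
proof -
  obtain u v where uv: "noncollinear d u v" "card (fhull X Ls {d, u, v}) = card (fhull X Ls {a, b, c})"
    using ex_triangle_at_point_same_card[OF nc de(1)] .
  show ?thesis
  proof (cases "e \<in> fhull X Ls {d, u, v}")
    case True
    then show ?thesis using fhull_triangle_through_side[OF uv(1) True de(3)[symmetric]] uv(2) that
      by metis
  next
    case False
    then have "e \<notin> line d u" using line_subset_fhull_triangle[OF uv(1)] by blast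
    then have nc': "noncollinear d u e" using uv(1) de by (simp add: noncollinear_def)
    then have "card (fhull X Ls {d, e, u}) = card (fhull X Ls {a, b, c})"
      using card_fhull_triangle_on_line[OF nc' uv(1)] uv(2) by (simp add: insert_commute)
    then show ?thesis using that noncollinear_perms(2)[OF nc'] by blast
  qed
qed

lemma card_fhull_triangle_eq:
  assumes "noncollinear a b c" "noncollinear d e f"
  shows "card (fhull X Ls {a, b, c}) = card (fhull X Ls {d, e, f})"
proof -
  obtain w where "noncollinear d e w" "card (fhull X Ls {d, e, w}) = card (fhull X Ls {a, b, c})"
    using ex_triangle_on_line_same_card[OF assms(1)] noncollinear_in_X[OF assms(2)]
      noncollinear_distinct(1)[OF assms(2)] by metis
  then show ?thesis using card_fhull_triangle_on_line[OF _ assms(2)] by metis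
qed

lemma parallel_if_card:
  assumes card: "\<And>a b p. noncollinear a b p \<Longrightarrow> card (fhull X Ls {a, b, p}) = 7 + 2 * k"
  shows "parallel X Ls k"
  unfolding parallel_def
proof (intro allI impI)
  fix P l z assume h: "plane X Ls P \<and> l \<in> Ls \<and> l \<subseteq> P \<and> z \<in> P - l"
  then obtain a b p where nc: "noncollinear a b p" and P: "P = fhull X Ls {a, b, p}"
    using plane_eq_fhull_triangle by blast
  have "card P = 7 + 2 * card (parallels P l z)"
    using card_flat_parallels[OF flat_fhull_triangle[OF nc] finite_fhull_triangle(1)[OF nc]] h P by auto
  then show "finite {\<Lambda>\<in>Ls. z \<in> \<Lambda> \<and> \<Lambda> \<subseteq> P - l} \<and> card {\<Lambda>\<in>Ls. z \<in> \<Lambda> \<and> \<Lambda> \<subseteq> P - l} = k"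
    using card[OF nc] finite_parallels[OF finite_fhull_triangle(1)[OF nc]] P
    unfolding parallels_def by simp
qed

lemma projective_if_card_7:
  assumes card: "\<And>a b p. noncollinear a b p \<Longrightarrow> card (fhull X Ls {a, b, p}) = 7"
  shows "projective X Ls"
  unfolding projective_def
proof (intro ballI)
  fix c x y p v
  assume X: "c \<in> X" "x \<in> X" "y \<in> X" and p: "p \<in> line x y" and v: "v \<in> line c y - {p}"
  have pv: "p \<in> X" "v \<in> X" "v \<noteq> p" using p v line_subset_X[OF X(2,3)] line_subset_X[OF X(1,3)] by auto
  show "line v p \<inter> line c x \<noteq> {}"
  proof (cases "p \<in> line c x")
    case True
    then show ?thesis using mem_line[OF pv(2,1)] by blast
  next
    case p_cx: False
    show ?thesis
    proof (cases "c = x")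
      case True
      then have "(p = v) \<longleftrightarrow> line v p \<inter> line c x = {}"
        using line_disjoint_iff_eq[OF X(1,3)] p v p_cx mem_line[OF X(1,2)] by blast
      then show ?thesis using pv(3) by blast
    next
      case False
      have nc: "noncollinear c x y" using noncollinear_if_mem_line[OF X False p p_cx] .
      let ?P = "fhull X Ls {c, x, y}"
      have flat: "flat X Ls ?P" using flat_fhull_triangle[OF nc] .
      have "line c y \<subseteq> ?P" "line x y \<subseteq> ?P"
        using flat_line_subset[OF flat] fhull_superset[of "{c, x, y}"] by auto
      then have "line v p \<subseteq> ?P" using flat_line_subset[OF flat] p v by blast
      then show ?thesis
        using lines_meet_flat7[OF flat finite_fhull_triangle(1)[OF nc] card[OF nc]
            line_in_Ls[OF pv(2,1,3)] _ line_in_Ls[OF X(1,2) False] line_subset_fhull_triangle[OF nc]]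
        by blast
    qed
  qed
qed

lemma affine_if_card_9:
  assumes card: "\<And>a b p. noncollinear a b p \<Longrightarrow> card (fhull X Ls {a, b, p}) = 9"
  shows "affine X Ls"
  unfolding affine_def
proof (intro ballI)
  fix c x y p assume X: "c \<in> X" "x \<in> X" "y \<in> X" and p: "p \<in> line x y - line c x"
  have c_cx: "c \<in> line c x" using mem_line[OF X(1,2)] by blast
  show "\<exists>u\<in>line c y. \<forall>v\<in>line c y. (u = v) = (line v p \<inter> line c x = {})"
  proof (cases "c = x \<or> p \<in> line c y")
    case True
    then have "p \<in> line c y" using p by auto
    with p have "(p = v) \<longleftrightarrow> line v p \<inter> line c x = {}" if "v \<in> line c y" for v
      using line_disjoint_iff_eq[OF X(1,3) _ that c_cx] by blast
    with \<open>p \<in> line c y\<close> show ?thesis by blast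
  next
    case False
    then have "c \<noteq> x" "p \<notin> line c y" by auto
    have nc: "noncollinear c x y" using noncollinear_if_mem_line[OF X \<open>c \<noteq> x\<close>, of p] p by blast
    have "c \<noteq> y" using noncollinear_distinct(2)[OF nc] .
    have "y \<notin> line c x" using nc by (simp add: noncollinear_def)
    then have "line c x \<noteq> line c y" using mem_line(2)[OF X(1,3)] by blast
    let ?P = "fhull X Ls {c, x, y}"
    have flat: "flat X Ls ?P" using flat_fhull_triangle[OF nc] .
    have cxy: "c \<in> ?P" "x \<in> ?P" "y \<in> ?P" using fhull_superset[of "{c, x, y}"] by auto
    have "line c y \<subseteq> ?P" "p \<in> ?P"
      using p flat_line_subset[OF flat cxy(1,3)] flat_line_subset[OF flat cxy(2,3)] by auto
    obtain u where "u \<in> line c y" "\<And>v. v \<in> line c y \<Longrightarrow> (u = v) \<longleftrightarrow> line v p \<inter> line c x = {}"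
      using unique_disjoint_line_flat9[OF flat finite_fhull_triangle(1)[OF nc] card[OF nc]
          line_in_Ls[OF X(1,2) \<open>c \<noteq> x\<close>] line_subset_fhull_triangle[OF nc]
          line_in_Ls[OF X(1,3) \<open>c \<noteq> y\<close>] \<open>line c y \<subseteq> ?P\<close> \<open>line c x \<noteq> line c y\<close> c_cx
          mem_line(1)[OF X(1,3)] \<open>p \<in> ?P\<close>] p \<open>p \<notin> line c y\<close>
      by blast
    then show ?thesis by blast
  qed
qed

end

theorem theorem4p2p7:
  fixes X :: "'a set" and Ls :: "'a set set"
  assumes "liner X Ls" and "steiner Ls" and "three_regular X Ls"
  shows "(\<exists>p\<in>{0, 1}. parallel X Ls p) \<and> (projective X Ls \<or> affine X Ls)"
proof -
  interpret regular_steiner_liner X Ls using assms by unfold_locales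
  show ?thesis
  proof (cases "\<exists>a b p. noncollinear a b p \<and> card (fhull X Ls {a, b, p}) = 9")
    case True
    then have "card (fhull X Ls {a, b, p}) = 9" if "noncollinear a b p" for a b p
      using card_fhull_triangle_eq that by metis
    then have "parallel X Ls 1" "affine X Ls"
      using parallel_if_card[of 1] affine_if_card_9 by auto
    then show ?thesis by auto
  next
    case False
    then have "card (fhull X Ls {a, b, p}) = 7" if "noncollinear a b p" for a b p
      using card_fhull_triangle that by blast
    then have "parallel X Ls 0" "projective X Ls"
      using parallel_if_card[of 0] projective_if_card_7 by auto
    then show ?thesis by auto
  qed
qed

end
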